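(* Let $\varphi=\frac{1+\sqrt5}{2}$ and $\bar\varphi=\frac{1-\sqrt5}{2}$. Consider the two systems of functional equations for a map $f:\mathsf P^1(\mathbb Z)\to\mathsf P^1(\mathbb C)$: (A) $f(1-1/x)=1-1/f(x)$ and $f(-1/x)=-f(x)$ for all $x\in\mathsf P^1(\mathbb Z)$; (B) $f(1-1/x)=1-1/f(x)$ and $f(-1/(1+x))=-1-1/f(x)$ for all $x\in\mathsf P^1(\mathbb Z)$. Each of (A) and (B) has exactly two solutions, namely one with $f(1)=\varphi^2=\frac{3+\sqrt5}{2}$ and one with $f(1)=\bar\varphi^2=\frac{3-\sqrt5}{2}$.
   Context: $\mathsf P^1(\mathbb Z)=\mathbb Q\cup\{\infty\}$, $\mathsf P^1(\mathbb C)=\mathbb C\cup\{\infty\}$, with Möbius transformations extended to $\infty$ in the usual way. Interpretation: with Dyer's outer automorphism $\alpha$ of $\mathsf{PGL}_2(\mathbb Z)$ (defined by $\alpha(U)=U$, $\alpha(K)=K$, $\alpha(V)=UV$ where $U(x)=1/x$, $K(x)=1-x$, $V(x)=-x$), system (A) says $f(gx)=\alpha(g)f(x)$ for all $g\in\mathsf{PSL}_2(\mathbb Z)$, and system (B) says the same for all $g$ in $\Gamma=\langle L,SLS\rangle$, where $L(x)=1-1/x$, $S(x)=-1/x$. *)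

theory Defs
  imports Complex_Main
begin

text \<open>Projective line P^1(K) = K \<union> {\<infinity>} over a field K, modelled as K option,
  with None = \<infinity>. P^1(Z) = Q \<union> {\<infinity>} is rat option, P^1(C) is complex option.\<close>

type_synonym 'a proj = "'a option"

definition moebL :: "'a::field option \<Rightarrow> 'a option" where
  "moebL x = (case x of None \<Rightarrow> Some 1
                | Some q \<Rightarrow> (if q = 0 then None else Some (1 - 1 / q)))"

definition moebS :: "'a::field option \<Rightarrow> 'a option" where
  "moebS x = (case x of None \<Rightarrow> Some 0
                | Some q \<Rightarrow> (if q = 0 then None else Some (- 1 / q)))"

definition moebNeg :: "'a::field option \<Rightarrow> 'a option" where
  "moebNeg x = (case x of None \<Rightarrow> None | Some q \<Rightarrow> Some (- q))"

definition moebT :: "'a::field option \<Rightarrow> 'a option" where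
  "moebT x = (case x of None \<Rightarrow> Some 0
                | Some q \<Rightarrow> (if 1 + q = 0 then None else Some (- 1 / (1 + q))))"

definition moebM :: "'a::field option \<Rightarrow> 'a option" where
  "moebM x = (case x of None \<Rightarrow> Some (- 1)
                | Some q \<Rightarrow> (if q = 0 then None else Some (- 1 - 1 / q)))"

definition sysA :: "(rat option \<Rightarrow> complex option) \<Rightarrow> bool" where
  "sysA f \<longleftrightarrow> (\<forall>x. f (moebL x) = moebL (f x) \<and> f (moebS x) = moebNeg (f x))"

definition sysB :: "(rat option \<Rightarrow> complex option) \<Rightarrow> bool" where
  "sysB f \<longleftrightarrow> (\<forall>x. f (moebL x) = moebL (f x) \<and> f (moebT x) = moebM (f x))"

definition phi :: complex where "phi = complex_of_real ((1 + sqrt 5) / 2)"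
definition phibar :: complex where "phibar = complex_of_real ((1 - sqrt 5) / 2)"

end

theory Submission
  imports Defs
begin

(* Both systems force f(\<infinity>) = w with w\<^sup>2 = w + 1, i.e. w \<in> {phi, phibar}, and then
   f(1) = L(w) = 1 - 1/w.  Every solution of (A) solves (B), as T = S L S and M = N L N.
   L and T act transitively on P\<^sup>1(\<rat>): translate by multiples of 2 = L T into [-1, 1), and
   from there lower the denominator with L; hence a solution of (B) is determined by f(\<infinity>).
   Conversely, for each such w a solution of (A) is built along continued fractions from
   f(x + 1) = 1 + 1/f(x) and f(-1/x) = -f(x).  Checking the second equation everywhere comes
   down to x \<mapsto> S(x - 1) = 1/(1 - x) having order 3; this transfers to the values because w is
   irrational, so that f never takes the values 0 or 1. *)


section \<open>The golden ratio\<close>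

lemma phi_add_phibar: "phi + phibar = 1"
proof -
  have "(1 + sqrt 5) / 2 + (1 - sqrt 5) / 2 = (1 :: real)" by (simp add: field_simps)
  then show ?thesis unfolding phi_def phibar_def by (metis of_real_add of_real_1)
qed

lemma phi_mult_phibar: "phi * phibar = - 1"
proof -
  have "(1 + sqrt 5) / 2 * ((1 - sqrt 5) / 2) = (- 1 :: real)"
    by (simp add: field_simps flip: power2_eq_square)
  then show ?thesis unfolding phi_def phibar_def by (metis of_real_mult of_real_minus of_real_1)
qed

lemma golden_iff: "w\<^sup>2 = w + 1 \<longleftrightarrow> w = phi \<or> w = phibar"
proof -
  have "(w - phi) * (w - phibar) = w\<^sup>2 - (phi + phibar) * w + phi * phibar"
    by (simp add: algebra_simps power2_eq_square)
  also have "\<dots> = w\<^sup>2 - w - 1"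
    by (simp add: phi_add_phibar phi_mult_phibar)
  finally have "w\<^sup>2 = w + 1 \<longleftrightarrow> (w - phi) * (w - phibar) = 0"
    by (metis eq_iff_diff_eq_0 diff_diff_eq)
  then show ?thesis by simp
qed

lemma one_minus_inverse_phi: "1 - 1 / phi = phibar\<^sup>2"
proof -
  have "phi \<noteq> 0" using phi_mult_phibar by auto
  then have "1 / phi = - phibar" using phi_mult_phibar by (simp add: field_simps)
  then show ?thesis using golden_iff[of phibar] by simp
qed

lemma one_minus_inverse_phibar: "1 - 1 / phibar = phi\<^sup>2"
proof -
  have "phibar \<noteq> 0" using phi_mult_phibar by auto
  then have "1 / phibar = - phi" using phi_mult_phibar by (simp add: field_simps)
  then show ?thesis using golden_iff[of phi] by simp
qed

lemma golden_not_Rats: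
  fixes w :: "'a::field_char_0" assumes "w\<^sup>2 = w + 1" shows "w \<notin> \<rat>"
proof
  assume "w \<in> \<rat>"
  then obtain r where "w = of_rat r" by (auto simp: Rats_def)
  with assms have "of_rat (r\<^sup>2) = (of_rat (r + 1) :: 'a)" by (simp add: of_rat_power of_rat_add)
  then have r: "r\<^sup>2 = r + 1" by (simp only: of_rat_eq_iff)
  obtain a b where ab: "quotient_of r = (a, b)" by fastforce
  have b: "b > 0" and "coprime a b" and r_ab: "r = of_int a / of_int b"
    using quotient_of_denom_pos[OF ab] quotient_of_coprime[OF ab] quotient_of_div[OF ab] by auto
  from r r_ab b have "of_int (a\<^sup>2) = (of_int (a * b + b\<^sup>2) :: rat)"
    by (simp add: field_simps power2_eq_square)
  then have a: "a\<^sup>2 = a * b + b\<^sup>2" by (simp only: of_int_eq_iff)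
  then have "b dvd a\<^sup>2" by (simp add: power2_eq_square)
  with \<open>coprime a b\<close> have "is_unit b"
    by (metis coprime_common_divisor coprime_commute coprime_dvd_mult_right_iff dvd_refl power2_eq_square)
  with b have "b = 1" by simp
  with a have "a * (a - 1) = 1" by (simp add: algebra_simps power2_eq_square)
  moreover have "even (a * (a - 1))" by simp
  ultimately show False by simp
qed

section \<open>Denominators of rationals\<close>

definition denom :: "rat \<Rightarrow> int" where
  "denom x = snd (quotient_of x)"

lemma denom_pos: "denom x > 0"
  by (simp add: denom_def quotient_of_denom_pos')

lemma denom_add_of_int: "denom (x + of_int k) = denom x"
proof -
  obtain a b where ab: "quotient_of x = (a, b)" by fastforce
  have "coprime (a + k * b) b"
    using quotient_of_coprime[OF ab] gcd_add_mult[of b k a]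
    by (simp add: coprime_iff_gcd_eq_1 gcd.commute add.commute)
  then show ?thesis
    using quotient_of_denom_pos[OF ab] by (simp add: denom_def rat_plus_code ab)
qed

lemma denom_uminus: "denom (- x) = denom x"
  by (simp add: denom_def rat_uminus_code split: prod.split)

lemma denom_inverse_less:
  assumes "x \<noteq> 0" "\<bar>x\<bar> < 1" shows "denom (inverse x) < denom x"
proof -
  obtain a b where ab: "quotient_of x = (a, b)" by fastforce
  have b: "b > 0" using quotient_of_denom_pos[OF ab] .
  have "\<bar>of_int a / of_int b\<bar> < (1 :: rat)" using assms(2) quotient_of_div[OF ab] by simp
  then have "\<bar>a\<bar> < b" using b by (simp add: abs_div_pos divide_less_eq flip: of_int_abs)
  moreover have "a \<noteq> 0" using assms(1) quotient_of_div[OF ab] by auto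
  ultimately show ?thesis by (simp add: denom_def rat_inverse_code ab)
qed

lemma denom_inverse_frac_less:
  assumes "x \<notin> \<int>" shows "denom (- 1 / frac x) < denom x"
proof -
  have "denom (- 1 / frac x) = denom (inverse (frac x))"
    by (metis denom_uminus divide_minus_left inverse_eq_divide)
  also have "\<dots> < denom (frac x)"
    using assms frac_lt_1[of x] by (intro denom_inverse_less) auto
  also have "denom (frac x) = denom x"
    by (metis denom_add_of_int diff_conv_add_uminus frac_def of_int_minus)
  finally show ?thesis .
qed

section \<open>A solution of (A)\<close>

(* shift is the image 1 - 1/(-z) of the translation x + 1 = L (S x) under a solution of (A).
   Thanks to z / 0 = 0, shift and unshift are mutually inverse on all of \<complex>. *)

definition shift :: "complex \<Rightarrow> complex" where
  "shift z = 1 + 1 / z"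

definition unshift :: "complex \<Rightarrow> complex" where
  "unshift z = 1 / (z - 1)"

lemma shift_unshift [simp]: "shift (unshift z) = z"
  by (cases "z = 1") (simp_all add: shift_def unshift_def)

lemma unshift_shift [simp]: "unshift (shift z) = z"
  by (cases "z = 0") (simp_all add: shift_def unshift_def)

lemma shift_Rats_iff [simp]: "shift z \<in> \<rat> \<longleftrightarrow> z \<in> \<rat>"
  by (metis Rats_1 Rats_add Rats_diff Rats_divide add_diff_cancel_left' shift_def unshift_def unshift_shift)

lemma unshift_Rats_iff [simp]: "unshift z \<in> \<rat> \<longleftrightarrow> z \<in> \<rat>"
  by (metis shift_Rats_iff shift_unshift)

definition shift_pow :: "int \<Rightarrow> complex \<Rightarrow> complex" where
  "shift_pow n = (if n \<ge> 0 then shift ^^ nat n else unshift ^^ nat (- n))"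

lemma shift_pow_0 [simp]: "shift_pow 0 z = z"
  by (simp add: shift_pow_def)

lemma shift_pow_add_one: "shift_pow (n + 1) z = shift (shift_pow n z)"
proof (cases "n \<ge> 0")
  case True
  then have "nat (n + 1) = Suc (nat n)" by simp
  with True show ?thesis by (simp add: shift_pow_def)
next
  case False
  then have "nat (- n) = Suc (nat (- (n + 1)))" by simp
  with False show ?thesis by (simp add: shift_pow_def)
qed

lemma shift_pow_Rats_iff [simp]: "shift_pow n z \<in> \<rat> \<longleftrightarrow> z \<in> \<rat>"
proof -
  have "(f ^^ m) z \<in> \<rat> \<longleftrightarrow> z \<in> \<rat>"
    if "\<And>z. f z \<in> \<rat> \<longleftrightarrow> z \<in> \<rat>" for f :: "complex \<Rightarrow> complex" and m
    by (induction m) (simp_all add: that)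
  then show ?thesis by (simp add: shift_pow_def)
qed

(* Continued-fraction recursion: f(x) = shift\<^bsup>\<lfloor>x\<rfloor>\<^esup>(f(frac x)), where
   f(frac x) = -f(-1/frac x) and f(0) = -f(\<infinity>) = -w. *)

function sol_rat :: "complex \<Rightarrow> rat \<Rightarrow> complex" where
  "sol_rat w x = shift_pow \<lfloor>x\<rfloor> (- (if x \<in> \<int> then w else sol_rat w (- 1 / frac x)))"
  by auto
termination
  by (relation "measure (\<lambda>(w, x). nat (denom x))") (use denom_inverse_frac_less denom_pos in auto)

declare sol_rat.simps [simp del]

lemma sol_rat_add_one: "sol_rat w (x + 1) = shift (sol_rat w x)"
proof -
  have "x + 1 \<in> \<int> \<longleftrightarrow> x \<in> \<int>"
    by (metis Ints_1 Ints_add Ints_diff add_diff_cancel_right')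
  then show ?thesis
    by (simp add: sol_rat.simps[of w "x + 1"] sol_rat.simps[of w x] frac_1_eq shift_pow_add_one)
qed

lemma sol_rat_diff_one: "sol_rat w (x - 1) = unshift (sol_rat w x)"
  by (metis diff_add_cancel sol_rat_add_one unshift_shift)

lemma sol_rat_0: "sol_rat w 0 = - w"
  by (simp add: sol_rat.simps)

lemma sol_rat_unit_interval:
  assumes "0 < x" "x < 1" shows "sol_rat w x = - sol_rat w (- 1 / x)"
proof -
  have "x \<notin> \<int>" using assms Ints_nonzero_abs_less1[of x] by auto
  moreover have "\<lfloor>x\<rfloor> = 0" using assms by (simp add: floor_eq_iff)
  ultimately show ?thesis using assms by (subst sol_rat.simps) (simp add: frac_eq)
qed

lemma sol_rat_not_Rats: "w \<notin> \<rat> \<Longrightarrow> sol_rat w x \<notin> \<rat>"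
  by (induction w x rule: sol_rat.induct) (subst sol_rat.simps, simp)

(* - unshift is the image of x \<mapsto> S(x - 1) = 1/(1 - x), a map of order 3. *)

lemma neg_unshift_order_3:
  assumes "z \<noteq> 0" "z \<noteq> 1" shows "- unshift (- unshift (- unshift z)) = z"
proof -
  have "1 - z \<noteq> 0" using assms by simp
  with assms show ?thesis by (simp add: unshift_def field_simps)
qed

lemma sol_rat_neg_inverse_pos:
  assumes golden: "w\<^sup>2 = w + 1" and "x > 0"
  shows "sol_rat w (- 1 / x) = - sol_rat w x"
  using \<open>x > 0\<close>
proof (induction "nat \<lfloor>x\<rfloor>" arbitrary: x)
  case 0
  then have "x < 1" by linarith
  with \<open>x > 0\<close> show ?case by (simp add: sol_rat_unit_interval)
next
  case (Suc n)
  have w: "w \<notin> \<rat>" using golden by (rule golden_not_Rats)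
  consider "x = 1" | "x > 1" using Suc.hyps(2) by linarith
  then show ?case
  proof cases
    case 1
    have "w \<noteq> 0" "- w - 1 \<noteq> 0"
      using w by (auto simp: minus_equation_iff[of w] diff_eq_eq)
    then have "unshift (- w) = - shift (- w)"
      using golden by (simp add: shift_def unshift_def field_simps power2_eq_square)
    then show ?thesis
      using 1 sol_rat_diff_one[of w 0] sol_rat_add_one[of w 0] by (simp add: sol_rat_0)
  next
    case 2
    define y where "y = x - 1"
    have "n = nat \<lfloor>y\<rfloor>" "y > 0" using 2 Suc.hyps(2) by (auto simp: y_def)
    then have IH: "sol_rat w (- 1 / y) = - sol_rat w y" by (rule Suc.hyps(1))
    define u where "u = y / x"
    have u: "0 < u" "u < 1" using \<open>y > 0\<close> 2 by (simp_all add: u_def y_def)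
    have x_u: "- 1 / x = u - 1" and u_y: "- 1 / u = - 1 / y - 1"
      using \<open>y > 0\<close> 2 by (simp_all add: u_def y_def field_simps)
    have y_x: "sol_rat w y = unshift (sol_rat w x)"
      by (simp add: y_def sol_rat_diff_one)
    have "sol_rat w (- 1 / x) = unshift (- sol_rat w (- 1 / u))"
      by (simp only: x_u sol_rat_diff_one sol_rat_unit_interval[OF u])
    also have "\<dots> = unshift (- unshift (- unshift (sol_rat w x)))"
      by (simp only: u_y sol_rat_diff_one IH y_x)
    also have "\<dots> = - sol_rat w x"
      using neg_unshift_order_3[of "sol_rat w x"] sol_rat_not_Rats[OF w, of x]
      by (metis Rats_0 Rats_1 minus_minus)
    finally show ?thesis .
  qed
qed

lemma sol_rat_neg_inverse:
  assumes golden: "w\<^sup>2 = w + 1" and "x \<noteq> 0"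
  shows "sol_rat w (- 1 / x) = - sol_rat w x"
proof (cases "x > 0")
  case True
  with golden show ?thesis by (rule sol_rat_neg_inverse_pos)
next
  case False
  with \<open>x \<noteq> 0\<close> have "- 1 / x > 0" by (simp add: divide_neg_neg)
  from sol_rat_neg_inverse_pos[OF golden this] \<open>x \<noteq> 0\<close> show ?thesis by simp
qed

definition sol :: "complex \<Rightarrow> rat option \<Rightarrow> complex option" where
  "sol w x = Some (case x of None \<Rightarrow> w | Some q \<Rightarrow> sol_rat w q)"

lemma sol_rat_1: "sol_rat w 1 = 1 - 1 / w"
  using sol_rat_add_one[of w 0] by (simp add: sol_rat_0 shift_def)

lemma sol_at_1: "sol w (Some 1) = Some (1 - 1 / w)"
  by (simp add: sol_def sol_rat_1)

lemma sysA_sol: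
  assumes golden: "w\<^sup>2 = w + 1" shows "sysA (sol w)"
  unfolding sysA_def
proof (intro allI conjI)
  have w: "w \<notin> \<rat>" using golden by (rule golden_not_Rats)
  then have "w \<noteq> 0" by auto
  fix x
  show "sol w (moebL x) = moebL (sol w x)"
  proof (cases x)
    case None
    with \<open>w \<noteq> 0\<close> show ?thesis by (simp add: sol_def moebL_def sol_rat_1)
  next
    case (Some q)
    have "sol_rat w (1 - 1 / q) = 1 - 1 / sol_rat w q" if "q \<noteq> 0"
      using sol_rat_add_one[of w "- 1 / q"] sol_rat_neg_inverse[OF golden that]
      by (simp add: shift_def add.commute)
    moreover have "1 + 1 / w = w"
      using golden \<open>w \<noteq> 0\<close> by (simp add: field_simps power2_eq_square)
    moreover have "sol_rat w q \<noteq> 0"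
      using sol_rat_not_Rats[OF w] by (metis Rats_0)
    ultimately show ?thesis using Some by (simp add: sol_def moebL_def sol_rat_0)
  qed
  show "sol w (moebS x) = moebNeg (sol w x)"
    using sol_rat_neg_inverse[OF golden]
    by (cases x) (simp_all add: sol_def moebS_def moebNeg_def sol_rat_0)
qed

section \<open>Uniqueness\<close>

lemma moebS_moebL_moebS: "moebS (moebL (moebS x)) = moebT (x :: 'a::field option)"
  by (cases x) (auto simp: moebS_def moebL_def moebT_def field_simps)

lemma moebNeg_moebL_moebNeg: "moebNeg (moebL (moebNeg x)) = moebM (x :: 'a::field option)"
  by (cases x) (auto simp: moebNeg_def moebL_def moebM_def)

lemma sysA_imp_sysB: "sysA f \<Longrightarrow> sysB f"
  unfolding sysA_def sysB_def by (metis moebS_moebL_moebS moebNeg_moebL_moebNeg)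

inductive_set orbit :: "('a \<Rightarrow> 'a) set \<Rightarrow> 'a \<Rightarrow> 'a set" for G :: "('a \<Rightarrow> 'a) set" and a :: 'a
where
  orbit_base: "a \<in> orbit G a"
| orbit_step: "g \<in> G \<Longrightarrow> x \<in> orbit G a \<Longrightarrow> g x \<in> orbit G a"

lemma orbit_moebL_moebT_add_two:
  assumes "Some x \<in> orbit {moebL, moebT} None" shows "Some (x + 2) \<in> orbit {moebL, moebT} None"
proof -
  have "moebL (moebT (Some x)) = Some (x + 2)"
    by (cases "x = - 1") (auto simp: moebL_def moebT_def field_simps)
  with assms show ?thesis by (metis insertI1 insertI2 orbit_step)
qed

lemma orbit_moebL_moebT_diff_two:
  assumes "Some x \<in> orbit {moebL, moebT} None" shows "Some (x - 2) \<in> orbit {moebL, moebT} None"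
proof -
  have "moebT (moebT (moebL (moebL (Some x)))) = Some (x - 2)"
    by (auto simp: moebL_def moebT_def field_simps)
  with assms show ?thesis by (metis insertI1 insertI2 orbit_step)
qed

lemma orbit_moebL_moebT_add_even:
  assumes "Some x \<in> orbit {moebL, moebT} None"
  shows "Some (x + 2 * of_int k) \<in> orbit {moebL, moebT} None"
proof (induction k rule: int_induct[where k = 0])
  case base
  with assms show ?case by simp
next
  case (step1 k)
  then show ?case using orbit_moebL_moebT_add_two by (fastforce simp: algebra_simps)
next
  case (step2 k)
  then show ?case using orbit_moebL_moebT_diff_two by (fastforce simp: algebra_simps)
qed

lemma orbit_moebL_moebT_eq_UNIV: "orbit {moebL, moebT} (None :: rat option) = UNIV"
proof -
  let ?O = "orbit {moebL, moebT} (None :: rat option)"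
  have L: "moebL x \<in> ?O" and T: "moebT x \<in> ?O" if "x \<in> ?O" for x
    using that by (auto intro: orbit_step)
  have "Some x \<in> ?O" for x
  proof (induction x rule: measure_induct_rule[where f = "\<lambda>x. nat (denom x)"])
    case (less x)
    define k where "k = \<lfloor>(x + 1) / 2\<rfloor>"
    define y where "y = x - 2 * of_int k"
    have y: "- 1 \<le> y" "y < 1"
      using floor_correct[of "(x + 1) / 2"] by (simp_all add: y_def k_def field_simps)
    have "Some y \<in> ?O"
    proof -
      consider "y = 0" | "y = - 1" | "y \<noteq> 0" "\<bar>y\<bar> < 1" using y by linarith
      then show ?thesis
      proof cases
        case 1
        then show ?thesis using T[OF orbit_base] by (simp add: moebT_def)
      next
        case 2
        have "moebT (moebT None) = Some (- 1 :: rat)" by (simp add: moebT_def)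
        with 2 show ?thesis using T[OF T[OF orbit_base]] by simp
      next
        case 3
        define z where "z = 1 - 1 / y"
        have "denom z = denom (inverse y)"
          by (metis z_def denom_add_of_int denom_uminus diff_conv_add_uminus inverse_eq_divide
              add.commute of_int_1)
        also have "\<dots> < denom x"
          using denom_inverse_less[OF 3] denom_add_of_int[of x "- 2 * k"] by (simp add: y_def)
        finally have "Some z \<in> ?O" using less denom_pos[of z] by simp
        moreover have "moebL (moebL (Some z)) = Some y"
          using 3 y by (simp add: z_def moebL_def field_simps)
        ultimately show ?thesis using L by metis
      qed
    qed
    then show ?case using orbit_moebL_moebT_add_even[of y k] by (simp add: y_def)
  qed
  then show ?thesis by (metis UNIV_eq_I not_None_eq orbit_base)
qed

lemma sysB_eq_if_eq_at_inf:
  assumes "sysB f" "sysB g" "f None = g None" shows "f = g"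
proof
  fix x :: "rat option"
  have "x \<in> orbit {moebL, moebT} None" by (simp add: orbit_moebL_moebT_eq_UNIV)
  then show "f x = g x"
    by (induction rule: orbit.induct) (use assms in \<open>auto simp: sysB_def\<close>)
qed

lemma moebL_eq_iff: "moebL x = moebL y \<longleftrightarrow> x = (y :: 'a::field option)"
  by (cases x; cases y) (auto simp: moebL_def split: if_splits)

lemma sysB_at_1: "sysB f \<Longrightarrow> f (Some 1) = moebL (f None)"
  unfolding sysB_def by (metis moebL_def option.simps(4))

lemma sysB_eq_if_eq_at_1:
  assumes "sysB f" "sysB g" "f (Some 1) = g (Some 1)" shows "f = g"
  using assms sysB_eq_if_eq_at_inf by (simp add: sysB_at_1 moebL_eq_iff)

lemma sysB_value_at_inf:
  assumes "sysB f" obtains w where "f None = Some w" "w\<^sup>2 = w + 1"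
proof -
  have "f (Some 0) = moebM (f None)"
    using assms[unfolded sysB_def, rule_format, of None] by (simp add: moebT_def)
  moreover have "f (Some 0) = moebL (f (Some 1))"
    using assms[unfolded sysB_def, rule_format, of "Some 1"] by (simp add: moebL_def)
  ultimately have eq: "moebM (f None) = moebL (moebL (f None))"
    using sysB_at_1[OF assms] by simp
  show ?thesis
  proof (cases "f None")
    case None
    with eq show ?thesis by (simp add: moebL_def moebM_def)
  next
    case (Some w)
    consider "w = 0" | "w = 1" | "w \<noteq> 0" "w - 1 \<noteq> 0" by fastforce
    then have "w\<^sup>2 = w + 1"
    proof cases
      case 3
      then have "1 - 1 / w \<noteq> 0" by (simp add: field_simps)
      with 3 eq Some have "- 1 - 1 / w = 1 - 1 / (1 - 1 / w)" by (simp add: moebL_def moebM_def)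
      with 3 show ?thesis by (simp add: field_simps power2_eq_square)
    qed (use eq Some in \<open>simp_all add: moebL_def moebM_def\<close>)
    with Some that show ?thesis by blast
  qed
qed

lemma sysB_value_at_1:
  assumes "sysB f" shows "f (Some 1) = Some (phi\<^sup>2) \<or> f (Some 1) = Some (phibar\<^sup>2)"
proof -
  obtain w where w: "f None = Some w" "w\<^sup>2 = w + 1" using assms by (rule sysB_value_at_inf)
  then have "w \<noteq> 0" by auto
  with w have "f (Some 1) = Some (1 - 1 / w)" by (simp add: sysB_at_1[OF assms] moebL_def)
  with w(2) show ?thesis
    by (auto simp: golden_iff one_minus_inverse_phi one_minus_inverse_phibar)
qed

lemma ex1_solution_with_value_at_1:
  assumes "P f\<^sub>0" "f\<^sub>0 (Some 1) = v" "\<And>f. P f \<Longrightarrow> sysB f"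
  shows "\<exists>!f. P f \<and> f (Some 1) = v"
proof (rule ex1I[of _ f\<^sub>0])
  show "P f\<^sub>0 \<and> f\<^sub>0 (Some 1) = v" using assms(1,2) ..
  fix f assume "P f \<and> f (Some 1) = v"
  with assms show "f = f\<^sub>0" by (metis sysB_eq_if_eq_at_1)
qed

theorem mainTheorem10:
  shows "(\<exists>!f. sysA f \<and> f (Some 1) = Some (phi ^ 2))
       \<and> (\<exists>!f. sysA f \<and> f (Some 1) = Some (phibar ^ 2))
       \<and> (\<forall>f. sysA f \<longrightarrow> f (Some 1) = Some (phi ^ 2) \<or> f (Some 1) = Some (phibar ^ 2))
       \<and> (\<exists>!f. sysB f \<and> f (Some 1) = Some (phi ^ 2))
       \<and> (\<exists>!f. sysB f \<and> f (Some 1) = Some (phibar ^ 2))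
       \<and> (\<forall>f. sysB f \<longrightarrow> f (Some 1) = Some (phi ^ 2) \<or> f (Some 1) = Some (phibar ^ 2))"
proof -
  have A: "sysA (sol phibar)" "sysA (sol phi)"
    by (simp_all add: sysA_sol golden_iff)
  have v: "sol phibar (Some 1) = Some (phi\<^sup>2)" "sol phi (Some 1) = Some (phibar\<^sup>2)"
    by (simp_all add: sol_at_1 one_minus_inverse_phi one_minus_inverse_phibar)
  show ?thesis
  proof (intro conjI)
    show "\<exists>!f. sysA f \<and> f (Some 1) = Some (phi ^ 2)"
      using A(1) v(1) sysA_imp_sysB by (rule ex1_solution_with_value_at_1)
    show "\<exists>!f. sysA f \<and> f (Some 1) = Some (phibar ^ 2)"
      using A(2) v(2) sysA_imp_sysB by (rule ex1_solution_with_value_at_1)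
    show "\<exists>!f. sysB f \<and> f (Some 1) = Some (phi ^ 2)"
      using sysA_imp_sysB[OF A(1)] v(1) by (rule ex1_solution_with_value_at_1)
    show "\<exists>!f. sysB f \<and> f (Some 1) = Some (phibar ^ 2)"
      using sysA_imp_sysB[OF A(2)] v(2) by (rule ex1_solution_with_value_at_1)
  qed (use sysB_value_at_1 sysA_imp_sysB in blast)+
qed

end
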